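(* Let $(M,g)$ be a four-dimensional globally hyperbolic spacetime with an isometric embedding into a higher-dimensional Minkowski space as described in the context, and let $\Theta$ be a real constant skew-symmetric $4\times4$ matrix. To first order in $\Theta$, the deformed commutator of the coordinate functions is $$[x^\mu,x^\nu]_\Theta=2\mathrm{i}\,\Theta^{\mu\nu}(x),\qquad \Theta^{\mu\nu}(x)=\Theta^{\alpha\beta}J^\mu_{\ \alpha}(x)J^\nu_{\ \beta}(x),$$ where $J=\partial x/\partial X$ is the Jacobian of the map $X^\alpha\mapsto x^\mu(X)$; here $[x^\mu,x^\nu]_\Theta$ is computed as $\big(x_1^\mu\times_\Theta x_2^\nu-x_2^\nu\times_\Theta x_1^\mu\big)\big|_{x_1=x_2=x}$.
   Context: Fix an isometric embedding of $(M,g)$ into Minkowski space $\mathbb{L}^N$ with coordinates $(X^\mu,X^a)$, $\mu=0,\dots,3$, such that on the image $X^a=X^a(X^\mu)$ locally and the coordinates of $M$ are locally smooth invertible functions $x^\mu=x^\mu(X^\nu)$. The deformed product at two points is $f(x_1)\times_\Theta g(x_2)=\lim_{\epsilon\to0}\iint\chi(\epsilon X,\epsilon Y)f(X_1+\Theta X)g(X_2+Y)e^{-\mathrm{i}X\cdot Y}d^4Xd^4Y$, with $X_i$ the embedding point of $x_i$, $X\cdot Y$ the Minkowski product on $\mathbb{R}^4$, $\chi\in C_0^\infty(\mathbb{R}^4\times\mathbb{R}^4)$, $\chi(0,0)=1$. Equivalently, $f(x_1)\times_\Theta g(x_2)=\exp(\mathrm{i}\Theta^{\rho\sigma}(x_1,x_2)\partial_{x_1^\rho}\partial_{x_2^\sigma})f(x_1)g(x_2)$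 with $\Theta^{\rho\sigma}(x_1,x_2)=\Theta^{\mu\nu}J^\rho_{\ \mu}(x_1)J^\sigma_{\ \nu}(x_2)$. The deformed commutator is $[a,b]_\Theta=a\times_\Theta b-b\times_\Theta a$. *)

theory Defs
  imports "HOL-Analysis.Analysis"
begin

text \<open>Local coordinates x of M and the first four Minkowski coordinates X of the
embedding point are both modelled in real^4 (index type 4).\<close>

definition pd :: "4 \<Rightarrow> (real^4 \<Rightarrow> complex) \<Rightarrow> real^4 \<Rightarrow> complex" where
  "pd i f y = vector_derivative (\<lambda>s::real. f (y + s *\<^sub>R axis i 1)) (at 0)"

definition coord :: "4 \<Rightarrow> real^4 \<Rightarrow> complex" where
  "coord mu = (\<lambda>y. complex_of_real (y $ mu))"

text \<open>Jacobian J^mu_alpha(x) = dx^mu/dX^alpha of the local map X \<mapsto> x(X), evaluated at the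
embedding point X(x) of x.  Entry (J $ mu $ alpha).\<close>
definition Jac :: "(real^4 \<Rightarrow> real^4) \<Rightarrow> (real^4 \<Rightarrow> real^4) \<Rightarrow> real^4 \<Rightarrow> real^4^4" where
  "Jac xmap Xmap y = matrix (frechet_derivative xmap (at (Xmap y)))"

definition Theta2 :: "real^4^4 \<Rightarrow> (real^4 \<Rightarrow> real^4^4) \<Rightarrow> real^4 \<Rightarrow> real^4 \<Rightarrow> 4 \<Rightarrow> 4 \<Rightarrow> real" where
  "Theta2 Th J y1 y2 rho sg =
     (\<Sum>mu\<in>UNIV. \<Sum>nu\<in>UNIV. Th $ mu $ nu * J y1 $ rho $ mu * J y2 $ sg $ nu)"

text \<open>The deformed product f(x1) \<times>_Theta g(x2) truncated at first order in Theta,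
i.e. the first-order expansion of exp(i Theta^{rho sg}(x1,x2) d_{x1^rho} d_{x2^sg}) f(x1) g(x2).\<close>
definition star1 :: "real^4^4 \<Rightarrow> (real^4 \<Rightarrow> real^4^4) \<Rightarrow> (real^4 \<Rightarrow> complex) \<Rightarrow> (real^4 \<Rightarrow> complex)
    \<Rightarrow> real^4 \<Rightarrow> real^4 \<Rightarrow> complex" where
  "star1 Th J f g y1 y2 = f y1 * g y2
     + \<i> * (\<Sum>rho\<in>UNIV. \<Sum>sg\<in>UNIV.
              complex_of_real (Theta2 Th J y1 y2 rho sg) * pd rho f y1 * pd sg g y2)"

definition comm1 :: "real^4^4 \<Rightarrow> (real^4 \<Rightarrow> real^4^4) \<Rightarrow> (real^4 \<Rightarrow> complex) \<Rightarrow> (real^4 \<Rightarrow> complex)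
    \<Rightarrow> real^4 \<Rightarrow> complex" where
  "comm1 Th J a b y = star1 Th J a b y y - star1 Th J b a y y"

end

theory Submission
  imports Defs
begin

text \<open>The coordinate functions are linear, so their partial derivatives are Kronecker deltas and
the first-order star product of two of them picks out a single entry of the deformation matrix
\<open>\<Theta>\<^sup>\<rho>\<^sup>\<sigma>(x\<^sub>1,x\<^sub>2)\<close>. The commutator is therefore \<open>i(\<Theta>\<^sup>\<mu>\<^sup>\<nu>(x,x) - \<Theta>\<^sup>\<nu>\<^sup>\<mu>(x,x))\<close>, and skew-symmetry of
\<open>\<Theta>\<close> makes this \<open>2i\<Theta>\<^sup>\<mu>\<^sup>\<nu>(x)\<close>. Nothing about the Jacobian enters.\<close>

lemma pd_coord: "pd rho (coord mu) y = (if rho = mu then 1 else 0)"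
proof -
  have "((\<lambda>s::real. complex_of_real (y $ mu) + complex_of_real s * complex_of_real (axis rho 1 $ mu))
      has_vector_derivative complex_of_real (axis rho 1 $ mu)) (at 0)"
    unfolding has_vector_derivative_def
    by (auto intro!: derivative_eq_intros simp: scaleR_conv_of_real)
  then have "((\<lambda>s::real. coord mu (y + s *\<^sub>R axis rho 1))
      has_vector_derivative complex_of_real (axis rho 1 $ mu)) (at 0)"
    by (simp add: coord_def)
  then show ?thesis
    unfolding pd_def by (simp add: vector_derivative_at axis_def)
qed

lemma Theta2_transpose: "Theta2 (transpose Th) J y2 y1 sg rho = Theta2 Th J y1 y2 rho sg"
proof -
  have "Theta2 (transpose Th) J y2 y1 sg rho
      = (\<Sum>mu\<in>UNIV. \<Sum>nu\<in>UNIV. Th $ nu $ mu * J y2 $ sg $ mu * J y1 $ rho $ nu)"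
    by (simp add: Theta2_def transpose_def)
  also have "\<dots> = (\<Sum>nu\<in>UNIV. \<Sum>mu\<in>UNIV. Th $ nu $ mu * J y2 $ sg $ mu * J y1 $ rho $ nu)"
    by (rule sum.swap)
  also have "\<dots> = Theta2 Th J y1 y2 rho sg"
    by (simp add: Theta2_def mult_ac)
  finally show ?thesis .
qed

lemma Theta2_uminus: "Theta2 (- Th) J y1 y2 rho sg = - Theta2 Th J y1 y2 rho sg"
  by (simp add: Theta2_def sum_negf)

lemma Theta2_skew:
  assumes "transpose Th = - Th"
  shows "Theta2 Th J y2 y1 sg rho = - Theta2 Th J y1 y2 rho sg"
  by (metis Theta2_transpose Theta2_uminus assms minus_minus)

lemma star1_coord:
  "star1 Th J (coord mu) (coord nu) y1 y2
     = coord mu y1 * coord nu y2 + \<i> * complex_of_real (Theta2 Th J y1 y2 mu nu)"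
proof -
  have "(\<Sum>rho\<in>UNIV. \<Sum>sg\<in>UNIV. complex_of_real (Theta2 Th J y1 y2 rho sg)
            * pd rho (coord mu) y1 * pd sg (coord nu) y2)
      = (\<Sum>rho\<in>UNIV. \<Sum>sg\<in>UNIV.
            if sg = nu then if rho = mu then complex_of_real (Theta2 Th J y1 y2 rho sg) else 0 else 0)"
    unfolding pd_coord by (intro sum.cong refl) auto
  also have "\<dots> = complex_of_real (Theta2 Th J y1 y2 mu nu)"
    by simp
  finally show ?thesis
    by (simp add: star1_def)
qed

lemma comm1_coord:
  "comm1 Th J (coord mu) (coord nu) y
     = \<i> * complex_of_real (Theta2 Th J y y mu nu - Theta2 Th J y y nu mu)"
  by (simp add: comm1_def star1_coord algebra_simps)

theorem mainTheorem5:
  fixes Th :: "real^4^4"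
    and Xmap xmap :: "real^4 \<Rightarrow> real^4"
    and U :: "(real^4) set"
    and p :: "real^4"
  assumes skew: "transpose Th = - Th"
    and U_open: "open U"
    and p_in: "p \<in> U"
    and inv: "\<forall>q\<in>U. xmap (Xmap q) = q"
    and diff: "\<forall>q\<in>U. xmap differentiable (at (Xmap q))"
  shows "\<forall>mu nu. comm1 Th (Jac xmap Xmap) (coord mu) (coord nu) p
            = 2 * \<i> * complex_of_real (Theta2 Th (Jac xmap Xmap) p p mu nu)"
proof (intro allI)
  fix mu nu
  have "Theta2 Th (Jac xmap Xmap) p p nu mu = - Theta2 Th (Jac xmap Xmap) p p mu nu"
    using skew by (rule Theta2_skew)
  then show "comm1 Th (Jac xmap Xmap) (coord mu) (coord nu) p
      = 2 * \<i> * complex_of_real (Theta2 Th (Jac xmap Xmap) p p mu nu)"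
    by (simp add: comm1_coord)
qed

end
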